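(* In System $\mathsf{F_{<:}^{K\top}}$, if $\Theta \vdash_A R <: S$ and $\Theta \vdash_A S <: T$, then $\Theta \vdash_A R <: T$.
   Context: System $\mathsf{F_{<:}^{K\top}}$: raw types $T ::= \top \mid X \mid T\to T \mid \forall^{\mathsf K}(X<:T).T \mid \forall^\top(X<:T).T$, up to $\alpha$-conversion. Contexts $\Theta$: finite sequences of $X<:T$ or $x:T$ with distinct variables, each type well-formed (free type variables declared earlier) over the preceding part; $\Theta\vdash T$ means $T$ is well-formed over well-formed $\Theta$. Algorithmic subtyping $\Theta\vdash_A S<:T$ (for $\Theta\vdash S$, $\Theta\vdash T$) is generated by: (1) $\Theta\vdash_A T<:\top$; (2) $\Theta\vdash_A X<:X$; (3) if $T\not\equiv\top$, $T\not\equiv X$ and $\Theta,X<:S,\Theta'\vdash_A S<:T$, then $\Theta,X<:S,\Theta'\vdash_A X<:T$; (4) from $\Theta\vdash_A S'<:S$ and $\Theta\vdash_A T<:T'$ infer $\Theta\vdash_A S\to T<:S'\to T'$; (5) from $\Theta,X<:S\vdash_A T<:T'$ infer $\Theta\vdash_A\forall^{\mathsf K}(X<:S).T<:\forall^{\mathsf K}(X<:S).T'$; (6) from $\Theta\vdash_A T_0<:S_0$ and $\Theta,X<:S_0\vdash_A S_1<:T_1$ infer $\Theta\vdash_A\forall^{\mathsf K}(X<:S_0).S_1<:\forall^\top(X<:T_0).T_1$; (7) from $\Theta\vdash_A T_0<:S_0$ and $\Theta,X<:\top\vdash_A S_1<:T_1$ infer $\Theta\vdash_A\forall^\top(X<:S_0).S_1<:\forall^\top(X<:T_0).T_1$.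 *)

theory Defs
  imports Main
begin

text \<open>Index 0 refers to the most recent binding of the
  context; term-variable bindings also occupy an index.\<close>

datatype type =
    Top
  | TVar nat
  | Fun type type
  | AllK type type   \<comment> \<open>\<forall>^K (X<:S).T, the body binds index 0\<close>
  | AllT type type   \<comment> \<open>\<forall>^Top (X<:S).T, the body binds index 0\<close>

datatype binding = VarB type | TVarB type

type_synonym env = "binding list"

fun shiftT :: "nat \<Rightarrow> nat \<Rightarrow> type \<Rightarrow> type" where
  "shiftT n k Top = Top"
| "shiftT n k (TVar i) = (if i < k then TVar i else TVar (i + n))"
| "shiftT n k (Fun A B) = Fun (shiftT n k A) (shiftT n k B)"
| "shiftT n k (AllK A B) = AllK (shiftT n k A) (shiftT n (Suc k) B)"
| "shiftT n k (AllT A B) = AllT (shiftT n k A) (shiftT n (Suc k) B)"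

fun shiftB :: "nat \<Rightarrow> nat \<Rightarrow> binding \<Rightarrow> binding" where
  "shiftB n k (VarB T) = VarB (shiftT n k T)"
| "shiftB n k (TVarB T) = TVarB (shiftT n k T)"

text \<open>Lookup of the i-th binding, with its type shifted into the full context.\<close>
fun lookup :: "env \<Rightarrow> nat \<Rightarrow> binding option" where
  "lookup [] i = None"
| "lookup (B # \<Gamma>) 0 = Some (shiftB 1 0 B)"
| "lookup (B # \<Gamma>) (Suc i) = map_option (shiftB 1 0) (lookup \<Gamma> i)"

inductive wf_type :: "env \<Rightarrow> type \<Rightarrow> bool" where
  wf_Top: "wf_type \<Gamma> Top"
| wf_TVar: "lookup \<Gamma> i = Some (TVarB U) \<Longrightarrow> wf_type \<Gamma> (TVar i)"
| wf_Fun: "wf_type \<Gamma> A \<Longrightarrow> wf_type \<Gamma> B \<Longrightarrow> wf_type \<Gamma> (Fun A B)"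
| wf_AllK: "wf_type \<Gamma> A \<Longrightarrow> wf_type (TVarB A # \<Gamma>) B \<Longrightarrow> wf_type \<Gamma> (AllK A B)"
| wf_AllT: "wf_type \<Gamma> A \<Longrightarrow> wf_type (TVarB A # \<Gamma>) B \<Longrightarrow> wf_type \<Gamma> (AllT A B)"

inductive wf_env :: "env \<Rightarrow> bool" where
  wf_Nil: "wf_env []"
| wf_VarB: "wf_env \<Gamma> \<Longrightarrow> wf_type \<Gamma> T \<Longrightarrow> wf_env (VarB T # \<Gamma>)"
| wf_TVarB: "wf_env \<Gamma> \<Longrightarrow> wf_type \<Gamma> T \<Longrightarrow> wf_env (TVarB T # \<Gamma>)"

text \<open>Algorithmic subtyping; the well-formedness presuppositions are built into
  the axioms, so every derivable judgment is well-formed.\<close>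
inductive subA :: "env \<Rightarrow> type \<Rightarrow> type \<Rightarrow> bool" ("_ \<turnstile>\<^sub>A _ <: _" [50, 50, 50] 50) where
  SA_Top: "wf_env \<Gamma> \<Longrightarrow> wf_type \<Gamma> S \<Longrightarrow> \<Gamma> \<turnstile>\<^sub>A S <: Top"
| SA_Refl_TVar: "wf_env \<Gamma> \<Longrightarrow> wf_type \<Gamma> (TVar i) \<Longrightarrow> \<Gamma> \<turnstile>\<^sub>A TVar i <: TVar i"
| SA_Trans_TVar: "lookup \<Gamma> i = Some (TVarB U) \<Longrightarrow> T \<noteq> Top \<Longrightarrow> T \<noteq> TVar i \<Longrightarrow>
    \<Gamma> \<turnstile>\<^sub>A U <: T \<Longrightarrow> \<Gamma> \<turnstile>\<^sub>A TVar i <: T"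
| SA_Fun: "\<Gamma> \<turnstile>\<^sub>A S' <: S \<Longrightarrow> \<Gamma> \<turnstile>\<^sub>A T <: T' \<Longrightarrow> \<Gamma> \<turnstile>\<^sub>A Fun S T <: Fun S' T'"
| SA_AllK: "TVarB S # \<Gamma> \<turnstile>\<^sub>A T <: T' \<Longrightarrow> \<Gamma> \<turnstile>\<^sub>A AllK S T <: AllK S T'"
| SA_AllKT: "\<Gamma> \<turnstile>\<^sub>A T0 <: S0 \<Longrightarrow> TVarB S0 # \<Gamma> \<turnstile>\<^sub>A S1 <: T1 \<Longrightarrow>
    \<Gamma> \<turnstile>\<^sub>A AllK S0 S1 <: AllT T0 T1"
| SA_AllT: "\<Gamma> \<turnstile>\<^sub>A T0 <: S0 \<Longrightarrow> TVarB Top # \<Gamma> \<turnstile>\<^sub>A S1 <: T1 \<Longrightarrow>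
    \<Gamma> \<turnstile>\<^sub>A AllT S0 S1 <: AllT T0 T1"

end

theory Submission
  imports Defs
begin

text \<open>Transitivity is proved by induction on the middle type \<open>S\<close>, with an inner induction
  on the derivation of \<open>R <: S\<close> and a case analysis of \<open>S <: T\<close>. The only case that is
  not a direct recombination of induction hypotheses is
  \<open>\<forall>\<^sup>K(X<:S\<^sub>0).S\<^sub>1 <: \<forall>\<^sup>\<top>(X<:T\<^sub>0).T\<^sub>1 <: \<forall>\<^sup>\<top>(X<:T\<^sub>0').T\<^sub>1'\<close>: there \<open>T\<^sub>1 <: T\<^sub>1'\<close> is derived under
  the bound \<open>X<:\<top>\<close> and has to be moved under \<open>X<:S\<^sub>0\<close>. No general narrowing lemma is
  needed for this: rule (3) never consults a bound \<open>\<top>\<close>, because only \<open>\<top>\<close> lies below \<open>\<top>\<close>,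
  so a bound \<open>\<top>\<close> may be replaced by any well-formed type.\<close>

lemma lookup_append_length_TVarB:
  "\<exists>U. lookup (\<Delta> @ TVarB A # \<Gamma>) (length \<Delta>) = Some (TVarB U)"
  by (induction \<Delta>) auto

lemma lookup_append_length_Top:
  "lookup (\<Delta> @ TVarB Top # \<Gamma>) (length \<Delta>) = Some (TVarB Top)"
  by (induction \<Delta>) auto

lemma lookup_append_other:
  "i \<noteq> length \<Delta> \<Longrightarrow> lookup (\<Delta> @ B # \<Gamma>) i = lookup (\<Delta> @ B' # \<Gamma>) i"
proof (induction \<Delta> arbitrary: i)
  case Nil then show ?case by (cases i) auto
next
  case (Cons b \<Delta>) then show ?case by (cases i) auto
qed

lemma wf_type_change_TVarB:
  "wf_type (\<Delta> @ TVarB A # \<Gamma>) T \<Longrightarrow> wf_type (\<Delta> @ TVarB B # \<Gamma>) T"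
proof (induction "\<Delta> @ TVarB A # \<Gamma>" T arbitrary: \<Delta> rule: wf_type.induct)
  case wf_Top
  show ?case by (rule wf_type.wf_Top)
next
  case (wf_TVar i U)
  show ?case
  proof (cases "i = length \<Delta>")
    case True
    then show ?thesis using lookup_append_length_TVarB by (metis wf_type.wf_TVar)
  next
    case False
    then show ?thesis using wf_TVar lookup_append_other by (metis wf_type.wf_TVar)
  qed
next
  case (wf_Fun A' B')
  then show ?case by (simp add: wf_type.wf_Fun)
next
  case (wf_AllK A' B')
  then show ?case using wf_type.wf_AllK[of "\<Delta> @ TVarB B # \<Gamma>" A' B'] by fastforce
next
  case (wf_AllT A' B')
  then show ?case using wf_type.wf_AllT[of "\<Delta> @ TVarB B # \<Gamma>" A' B'] by fastforce
qed

lemma wf_env_change_TVarB: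
  "wf_env (\<Delta> @ TVarB A # \<Gamma>) \<Longrightarrow> wf_type \<Gamma> B \<Longrightarrow> wf_env (\<Delta> @ TVarB B # \<Gamma>)"
proof (induction \<Delta>)
  case Nil
  then show ?case by (auto elim: wf_env.cases intro: wf_env.intros)
next
  case (Cons b \<Delta>)
  from Cons.prems(1) show ?case
    by (cases rule: wf_env.cases) (use Cons wf_type_change_TVarB in \<open>auto intro: wf_env.intros\<close>)
qed

lemma subA_wf: "\<Gamma> \<turnstile>\<^sub>A R <: S \<Longrightarrow> wf_env \<Gamma> \<and> wf_type \<Gamma> R \<and> wf_type \<Gamma> S"
proof (induction rule: subA.induct)
  case (SA_AllK S \<Gamma> T T')
  then have "wf_env \<Gamma>" "wf_type \<Gamma> S" by (auto elim: wf_env.cases)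
  then show ?case using SA_AllK by (auto intro: wf_type.intros)
next
  case (SA_AllKT \<Gamma> T0 S0 S1 T1)
  have "wf_type (TVarB T0 # \<Gamma>) T1"
    using SA_AllKT wf_type_change_TVarB[of "[]"] by auto
  then show ?case using SA_AllKT by (auto intro: wf_type.intros)
next
  case (SA_AllT \<Gamma> T0 S0 S1 T1)
  have "wf_type (TVarB T0 # \<Gamma>) T1" "wf_type (TVarB S0 # \<Gamma>) S1"
    using SA_AllT wf_type_change_TVarB[of "[]"] by auto
  then show ?case using SA_AllT by (auto intro: wf_type.intros)
qed (auto intro: wf_type.intros)

lemma subA_Top_if_subA: "\<Gamma> \<turnstile>\<^sub>A R <: S \<Longrightarrow> \<Gamma> \<turnstile>\<^sub>A R <: Top"
  using subA_wf by (blast intro: SA_Top)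

lemma subA_Top_leftD: "\<Gamma> \<turnstile>\<^sub>A Top <: T \<Longrightarrow> T = Top"
  by (cases rule: subA.cases) auto

lemma subA_TVar_boundI:
  assumes bound: "lookup \<Gamma> i = Some (TVarB U)" and "\<Gamma> \<turnstile>\<^sub>A U <: T"
  shows "\<Gamma> \<turnstile>\<^sub>A TVar i <: T"
proof -
  have wf: "wf_env \<Gamma>" "wf_type \<Gamma> (TVar i)"
    using subA_wf[OF \<open>\<Gamma> \<turnstile>\<^sub>A U <: T\<close>] bound by (auto intro: wf_TVar)
  consider "T = Top" | "T = TVar i" | "T \<noteq> Top" "T \<noteq> TVar i" by blast
  then show ?thesis
  proof cases
    case 1 then show ?thesis using wf by (simp add: SA_Top)
  next
    case 2 then show ?thesis using wf by (simp add: SA_Refl_TVar)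
  next
    case 3 then show ?thesis using assms by (blast intro: SA_Trans_TVar)
  qed
qed

lemma subA_narrow_Top:
  "\<Delta> @ TVarB Top # \<Gamma> \<turnstile>\<^sub>A M <: N \<Longrightarrow> wf_type \<Gamma> P \<Longrightarrow> \<Delta> @ TVarB P # \<Gamma> \<turnstile>\<^sub>A M <: N"
proof (induction "\<Delta> @ TVarB Top # \<Gamma>" M N arbitrary: \<Delta> rule: subA.induct)
  case (SA_Top S)
  then show ?case using wf_env_change_TVarB wf_type_change_TVarB by (blast intro: subA.SA_Top)
next
  case (SA_Refl_TVar i)
  then show ?case using wf_env_change_TVarB wf_type_change_TVarB by (blast intro: subA.SA_Refl_TVar)
next
  case (SA_Trans_TVar i U T)
  show ?case
  proof (cases "i = length \<Delta>")
    case True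
    then have "U = Top" using SA_Trans_TVar lookup_append_length_Top by simp
    then show ?thesis using SA_Trans_TVar subA_Top_leftD by blast
  next
    case False
    then have "lookup (\<Delta> @ TVarB P # \<Gamma>) i = Some (TVarB U)"
      using SA_Trans_TVar lookup_append_other by metis
    then show ?thesis using SA_Trans_TVar by (auto intro: subA.SA_Trans_TVar)
  qed
next
  case (SA_Fun S' S T T')
  then show ?case by (auto intro: subA.SA_Fun)
next
  case (SA_AllK S T T')
  then show ?case using subA.SA_AllK[of S "\<Delta> @ TVarB P # \<Gamma>"] by fastforce
next
  case (SA_AllKT T0 S0 S1 T1)
  then show ?case using subA.SA_AllKT[of "\<Delta> @ TVarB P # \<Gamma>"] by fastforce
next
  case (SA_AllT T0 S0 S1 T1)
  then show ?case using subA.SA_AllT[of "\<Delta> @ TVarB P # \<Gamma>"] by fastforce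
qed

lemma subA_trans_if_trans_smaller:
  assumes "\<Gamma> \<turnstile>\<^sub>A R <: Q" and "\<Gamma> \<turnstile>\<^sub>A Q <: T"
    and trans_smaller: "\<And>Q' \<Gamma>' R' T'. size Q' < size Q \<Longrightarrow>
      \<Gamma>' \<turnstile>\<^sub>A R' <: Q' \<Longrightarrow> \<Gamma>' \<turnstile>\<^sub>A Q' <: T' \<Longrightarrow> \<Gamma>' \<turnstile>\<^sub>A R' <: T'"
  shows "\<Gamma> \<turnstile>\<^sub>A R <: T"
  using assms
proof (induction arbitrary: T rule: subA.induct)
  case (SA_Top \<Gamma> S)
  then show ?case using subA_Top_leftD by (metis subA.SA_Top)
next
  case (SA_Refl_TVar \<Gamma> i)
  then show ?case by simp
next
  case (SA_Trans_TVar \<Gamma> i U Q)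
  then show ?case by (blast intro: subA_TVar_boundI)
next
  case (SA_Fun \<Gamma> S' S R2 Q2)
  note trans = SA_Fun.prems(2)
  from SA_Fun.prems(1) show ?case
  proof (cases rule: subA.cases)
    case SA_Top
    then show ?thesis using SA_Fun.hyps by (blast intro: subA.SA_Fun subA_Top_if_subA)
  next
    case (SA_Fun T1 T2)
    have "\<Gamma> \<turnstile>\<^sub>A T1 <: S" using trans[of S'] SA_Fun SA_Fun.hyps by simp
    moreover have "\<Gamma> \<turnstile>\<^sub>A R2 <: T2" using trans[of Q2] SA_Fun SA_Fun.hyps by simp
    ultimately show ?thesis using SA_Fun by (simp add: subA.SA_Fun)
  qed
next
  case (SA_AllK S \<Gamma> R2 Q2)
  note trans = SA_AllK.prems(2)
  from SA_AllK.prems(1) show ?case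
  proof (cases rule: subA.cases)
    case SA_Top
    then show ?thesis using SA_AllK.hyps by (blast intro: subA.SA_AllK subA_Top_if_subA)
  next
    case (SA_AllK T2)
    have "TVarB S # \<Gamma> \<turnstile>\<^sub>A R2 <: T2" using trans[of Q2] SA_AllK SA_AllK.hyps by simp
    then show ?thesis using SA_AllK by (simp add: subA.SA_AllK)
  next
    case (SA_AllKT T0 T1)
    have "TVarB S # \<Gamma> \<turnstile>\<^sub>A R2 <: T1" using trans[of Q2] SA_AllKT SA_AllK.hyps by simp
    then show ?thesis using SA_AllKT by (simp add: subA.SA_AllKT)
  qed
next
  case (SA_AllKT \<Gamma> T0 S0 S1 T1)
  note trans = SA_AllKT.prems(2)
  from SA_AllKT.prems(1) show ?case
  proof (cases rule: subA.cases)
    case SA_Top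
    then show ?thesis using SA_AllKT.hyps by (blast intro: subA.SA_AllKT subA_Top_if_subA)
  next
    case (SA_AllT T0' T1')
    have "wf_type \<Gamma> S0" using subA_wf[OF \<open>\<Gamma> \<turnstile>\<^sub>A T0 <: S0\<close>] by blast
    then have "TVarB S0 # \<Gamma> \<turnstile>\<^sub>A T1 <: T1'"
      using subA_narrow_Top[of "[]"] \<open>TVarB Top # \<Gamma> \<turnstile>\<^sub>A T1 <: T1'\<close> by simp
    then have "TVarB S0 # \<Gamma> \<turnstile>\<^sub>A S1 <: T1'" using trans[of T1] SA_AllKT.hyps by simp
    moreover have "\<Gamma> \<turnstile>\<^sub>A T0' <: S0" using trans[of T0] SA_AllT SA_AllKT.hyps by simp
    ultimately show ?thesis using SA_AllT by (simp add: subA.SA_AllKT)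
  qed
next
  case (SA_AllT \<Gamma> T0 S0 S1 T1)
  note trans = SA_AllT.prems(2)
  from SA_AllT.prems(1) show ?case
  proof (cases rule: subA.cases)
    case SA_Top
    then show ?thesis using SA_AllT.hyps by (blast intro: subA.SA_AllT subA_Top_if_subA)
  next
    case (SA_AllT T0' T1')
    have "\<Gamma> \<turnstile>\<^sub>A T0' <: S0" using trans[of T0] SA_AllT SA_AllT.hyps by simp
    moreover have "TVarB Top # \<Gamma> \<turnstile>\<^sub>A S1 <: T1'" using trans[of T1] SA_AllT SA_AllT.hyps by simp
    ultimately show ?thesis using SA_AllT by (simp add: subA.SA_AllT)
  qed
qed

theorem lemma6p1:
  assumes "\<Theta> \<turnstile>\<^sub>A R <: S" and "\<Theta> \<turnstile>\<^sub>A S <: T"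
  shows "\<Theta> \<turnstile>\<^sub>A R <: T"
  using assms
proof (induction S arbitrary: \<Theta> R T rule: measure_induct_rule[of size])
  case (less S)
  then show ?case by (blast intro: subA_trans_if_trans_smaller)
qed

end
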